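(* Let $n>2$ be an integer. There exist two distinct $n$-multisets $A\neq B$ of complex numbers with $A^{(2)}=B^{(2)}$ if and only if $n$ is a power of $2$.
   Context: An $n$-multiset is a multiset $A=\{a_1,\dots,a_n\}$ of $n$ numbers, counted with multiplicity. For $1\le s\le n$, the multiset of $s$-sums of $A$, denoted $A^{(s)}$, is the multiset of the $\binom{n}{s}$ numbers $a_{i_1}+\dots+a_{i_s}$ over all index sets $1\le i_1<\dots<i_s\le n$. *)

theory Defs
  imports Complex_Main "HOL-Library.Multiset"
begin

definition ssums_list :: "'a::comm_monoid_add list \<Rightarrow> nat \<Rightarrow> 'a multiset" where
  "ssums_list xs s = image_mset (\<lambda>I. \<Sum>i\<in>I. xs ! i)
      (mset_set {I. I \<subseteq> {..<length xs} \<and> card I = s})"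

(* A^(s) for a multiset A, computed from any enumeration of A (independent of the choice). *)
definition ssums :: "'a::comm_monoid_add multiset \<Rightarrow> nat \<Rightarrow> 'a multiset" where
  "ssums A s = ssums_list (SOME xs. mset xs = A) s"

end

theory Submission
  imports Defs "HOL-Computational_Algebra.Polynomial"
begin

(* Counting every unordered pair twice gives the multiset identity 2 A^(2) + 2A = A + A,
   where A + A is the multiset of sums over ordered pairs and 2A = {2a | a in A}.
   Taking k-th power sums p_k turns it into
     2 p_k(A^(2)) + 2^k p_k(A) = sum_l (k choose l) p_l(A) p_(k-l)(A).
   If A and B have size n and equal 2-sums, induction on k gives
   (2n - 2^k) (p_k(A) - p_k(B)) = 0, so unless n is a power of 2 all power sums agree
   and A = B.  Conversely, A + A + 2B = B + B + 2A is preserved by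
   (A, B) |-> (A u (B + d), B u (A + d)); starting from ({0}, {1}) this yields the
   Prouhet-Thue-Morse partitions of {0, ..., 2^(k+1) - 1}. *)

lemma card_subsets_lessThan_Suc:
  "{I. I \<subseteq> {..<Suc n} \<and> card I = Suc s}
     = {I. I \<subseteq> {..<n} \<and> card I = Suc s} \<union> insert n ` {J. J \<subseteq> {..<n} \<and> card J = s}"
proof (intro equalityI subsetI)
  fix I assume I: "I \<in> {I. I \<subseteq> {..<Suc n} \<and> card I = Suc s}"
  show "I \<in> {I. I \<subseteq> {..<n} \<and> card I = Suc s} \<union> insert n ` {J. J \<subseteq> {..<n} \<and> card J = s}"
  proof (cases "n \<in> I")
    case True
    then have "I = insert n (I - {n})" "card (I - {n}) = s"
      using I finite_subset[of I "{..<Suc n}"] by auto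
    moreover have "I - {n} \<subseteq> {..<n}" using I by auto
    ultimately show ?thesis by blast
  next
    case False
    then show ?thesis using I by (auto simp: less_Suc_eq)
  qed
next
  fix I assume "I \<in> {I. I \<subseteq> {..<n} \<and> card I = Suc s} \<union> insert n ` {J. J \<subseteq> {..<n} \<and> card J = s}"
  then show "I \<in> {I. I \<subseteq> {..<Suc n} \<and> card I = Suc s}"
    by (auto simp: finite_subset[of _ "{..<n}"] card_insert_if)
qed

lemma ssums_list_Nil_Suc [simp]: "ssums_list [] (Suc s) = {#}"
proof -
  have no_subsets: "{I. I \<subseteq> {..<length []} \<and> card I = Suc s} = {}" by auto
  show ?thesis unfolding ssums_list_def no_subsets by simp
qed

lemma ssums_list_0 [simp]: "ssums_list xs 0 = {#0#}"
proof -
  have "{I. I \<subseteq> {..<length xs} \<and> card I = 0} = {{}}"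
    by (auto simp: finite_subset[of _ "{..<length xs}"])
  then show ?thesis by (simp add: ssums_list_def)
qed

lemma ssums_list_snoc_Suc:
  "ssums_list (xs @ [x]) (Suc s) = ssums_list xs (Suc s) + image_mset ((+) x) (ssums_list xs s)"
proof -
  let ?n = "length xs"
  let ?S = "\<lambda>k. {I. I \<subseteq> {..<?n} \<and> card I = k}"
  have sum_eq: "(\<Sum>i\<in>J. (xs @ [x]) ! i) = (\<Sum>i\<in>J. xs ! i)" if "J \<subseteq> {..<?n}" for J
    using that by (intro sum.cong) (auto simp: nth_append)
  have old: "image_mset (\<lambda>I. \<Sum>i\<in>I. (xs @ [x]) ! i) (mset_set (?S (Suc s))) = ssums_list xs (Suc s)"
    unfolding ssums_list_def by (intro image_mset_cong) (simp add: sum_eq)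
  have sum_insert: "(\<Sum>i\<in>insert ?n J. (xs @ [x]) ! i) = x + (\<Sum>i\<in>J. xs ! i)"
    if "J \<subseteq> {..<?n}" for J
    using that by (subst sum.insert) (auto simp: finite_subset[of _ "{..<?n}"] sum_eq)
  have "inj_on (insert ?n) (?S s)"
    by (rule inj_onI) (metis Diff_insert_absorb lessThan_iff mem_Collect_eq subsetD less_irrefl)
  then have new: "image_mset (\<lambda>I. \<Sum>i\<in>I. (xs @ [x]) ! i) (mset_set (insert ?n ` ?S s))
      = image_mset ((+) x) (ssums_list xs s)"
    unfolding ssums_list_def image_mset_mset_set[OF \<open>inj_on _ _\<close>, symmetric] multiset.map_comp
    by (intro image_mset_cong) (simp add: sum_insert)
  have "?S (Suc s) \<inter> insert ?n ` ?S s = {}" by auto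
  then show ?thesis
    unfolding ssums_list_def length_append_singleton card_subsets_lessThan_Suc
    by (simp add: mset_set_Union old[unfolded ssums_list_def] new[unfolded ssums_list_def])
qed

lemma ssums_list_1: "ssums_list xs 1 = mset xs"
  by (induction xs rule: rev_induct) (simp_all add: ssums_list_snoc_Suc[where s = 0, simplified])

definition sumset :: "'a::comm_monoid_add multiset \<Rightarrow> 'a multiset \<Rightarrow> 'a multiset" where
  "sumset M N = (\<Sum>y\<in>#M. image_mset ((+) y) N)"

lemma sumset_empty [simp]: "sumset {#} N = {#}"
  by (simp add: sumset_def)

lemma sumset_add_mset [simp]: "sumset (add_mset x M) N = image_mset ((+) x) N + sumset M N"
  by (simp add: sumset_def)

lemma sumset_union: "sumset (M + M') N = sumset M N + sumset M' N"
  by (simp add: sumset_def)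

lemma sumset_add_mset_right: "sumset M (add_mset x N) = image_mset ((+) x) M + sumset M N"
  by (induction M) (simp_all add: add.commute)

lemma sumset_empty_right [simp]: "sumset M {#} = {#}"
  by (induction M) simp_all

lemma sumset_commute: "sumset M N = sumset N M"
  by (induction M) (simp_all add: sumset_add_mset_right add.commute)

lemma sumset_union_right: "sumset M (N + N') = sumset M N + sumset M N'"
  by (simp add: sumset_commute[of M] sumset_union)

lemma sumset_shift: "sumset (image_mset ((+) d) M) N = image_mset ((+) d) (sumset M N)"
  by (induction M) (simp_all add: multiset.map_comp o_def add.assoc[symmetric])

lemma sumset_shift_right: "sumset M (image_mset ((+) d) N) = image_mset ((+) d) (sumset M N)"
  by (simp add: sumset_commute[of M] sumset_shift)

lemma sumset_image_mset:
  assumes "\<And>y z. f (y + z) = f y + f z"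
  shows "sumset (image_mset f M) (image_mset f N) = image_mset f (sumset M N)"
  by (induction M) (simp_all add: multiset.map_comp o_def assms)

lemma ssums_list_2_twice:
  "ssums_list xs 2 + ssums_list xs 2 + image_mset (\<lambda>y. y + y) (mset xs) = sumset (mset xs) (mset xs)"
proof (induction xs rule: rev_induct)
  case Nil
  then show ?case by (simp add: numeral_2_eq_2)
next
  case (snoc x xs)
  have "ssums_list (xs @ [x]) 2 = ssums_list xs 2 + image_mset ((+) x) (mset xs)"
    using ssums_list_snoc_Suc[of xs x 1] by (simp add: numeral_2_eq_2 ssums_list_1[unfolded One_nat_def])
  then show ?case
    by (simp add: sumset_add_mset_right flip: snoc.IH)
qed

lemma ssums_2_twice: "ssums M 2 + ssums M 2 + image_mset (\<lambda>y. y + y) M = sumset M M"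
proof -
  define xs where "xs = (SOME xs. mset xs = M)"
  have "mset xs = M"
    unfolding xs_def by (rule someI_ex) (rule ex_mset)
  then show ?thesis
    using ssums_list_2_twice[of xs] by (simp add: ssums_def xs_def[symmetric])
qed

lemma ssums_2_eq_iff:
  "ssums A 2 = ssums B 2 \<longleftrightarrow>
     sumset A A + image_mset (\<lambda>y. y + y) B = sumset B B + image_mset (\<lambda>y. y + y) A"
  (is "?eq \<longleftrightarrow> ?balanced")
proof
  assume ?eq
  then show ?balanced
    unfolding ssums_2_twice[of A, symmetric] ssums_2_twice[of B, symmetric] by simp
next
  assume ?balanced
  then have "ssums A 2 + ssums A 2 = ssums B 2 + ssums B 2"
    unfolding ssums_2_twice[of A, symmetric] ssums_2_twice[of B, symmetric] by simp
  then have twice: "count (ssums A 2) a + count (ssums A 2) a = count (ssums B 2) a + count (ssums B 2) a"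
    for a by (metis count_union)
  show ?eq
  proof (rule multiset_eqI)
    show "count (ssums A 2) a = count (ssums B 2) a" for a
      using twice[of a] by linarith
  qed
qed

definition power_sum :: "'a::comm_semiring_1 multiset \<Rightarrow> nat \<Rightarrow> 'a" where
  "power_sum M k = (\<Sum>x\<in>#M. x ^ k)"

lemma power_sum_empty [simp]: "power_sum {#} k = 0"
  by (simp add: power_sum_def)

lemma power_sum_add_mset [simp]: "power_sum (add_mset x M) k = x ^ k + power_sum M k"
  by (simp add: power_sum_def)

lemma power_sum_union [simp]: "power_sum (M + N) k = power_sum M k + power_sum N k"
  by (simp add: power_sum_def)

lemma power_sum_0 [simp]: "power_sum M 0 = of_nat (size M)"
  by (induction M) simp_all

lemma power_sum_image_double:
  "power_sum (image_mset (\<lambda>y. y + y) M) k = 2 ^ k * power_sum M k"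
  by (induction M) (simp_all add: mult_2[symmetric] power_mult_distrib distrib_left)

lemma power_sum_image_plus:
  "power_sum (image_mset ((+) x) N) k = (\<Sum>l\<le>k. of_nat (k choose l) * x ^ l * power_sum N (k - l))"
  by (induction N) (simp_all add: binomial_ring sum.distrib distrib_left mult.assoc)

lemma power_sum_sumset:
  "power_sum (sumset M N) k = (\<Sum>l\<le>k. of_nat (k choose l) * power_sum M l * power_sum N (k - l))"
  by (induction M) (simp_all add: power_sum_image_plus sum.distrib distrib_left distrib_right)

lemma power_sum_ssums_2:
  "2 * power_sum (ssums M 2) k + 2 ^ k * power_sum M k
     = (\<Sum>l\<le>k. of_nat (k choose l) * power_sum M l * power_sum M (k - l))"
  using arg_cong[OF ssums_2_twice[of M], of "\<lambda>X. power_sum X k"]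
  by (simp add: power_sum_image_double power_sum_sumset mult_2)

lemma multiset_eq_if_power_sums_eq:
  fixes A B :: "'a::{idom, ring_char_0} multiset"
  assumes "\<And>k. power_sum A k = power_sum B k"
  shows "A = B"
proof (rule multiset_eqI)
  fix x0
  \<comment> \<open>\<open>p\<close> vanishes at every element other than \<open>x0\<close>, so summing \<open>poly p\<close> over a
    multiset counts \<open>x0\<close>; that sum is also a linear combination of power sums.\<close>
  define F where "F = (set_mset A \<union> set_mset B) - {x0}"
  define p where "p = (\<Prod>y\<in>F. [:-y, 1:])"
  have poly_p: "poly p x = (\<Prod>y\<in>F. x - y)" for x
    unfolding p_def poly_prod by simp
  have "poly p x = (if x = x0 then poly p x0 else 0)" if "x \<in># A + B" for x
    using that by (auto simp: poly_p F_def)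
  then have delta: "(\<Sum>x\<in>#M. poly p x) = poly p x0 * of_nat (count M x0)" if "M \<subseteq># A + B" for M
    using that by (subst image_mset_cong[where g = "\<lambda>x. if x = x0 then poly p x0 else 0"])
      (auto simp: sum_mset_delta dest: mset_subset_eqD)
  have by_coeffs: "(\<Sum>x\<in>#M. poly p x) = (\<Sum>i\<le>degree p. coeff p i * power_sum M i)" for M
    by (induction M) (simp_all add: poly_altdef sum.distrib distrib_left)
  have "poly p x0 \<noteq> 0"
    by (auto simp: poly_p F_def)
  moreover have "poly p x0 * of_nat (count A x0) = poly p x0 * of_nat (count B x0)"
    using by_coeffs[of A] by_coeffs[of B] delta[of A] delta[of B] assms by simp
  ultimately show "count A x0 = count B x0"
    by simp
qed

lemma power_sum_convolution_split:
  assumes "k > 0"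
  shows "(\<Sum>l\<le>k. of_nat (k choose l) * power_sum M l * power_sum M (k - l))
     = 2 * of_nat (size M) * power_sum M k
       + (\<Sum>l\<in>{1..<k}. of_nat (k choose l) * power_sum M l * power_sum M (k - l))"
proof -
  have "{..k} = insert 0 (insert k {1..<k})"
    using assms by auto
  then show ?thesis
    using assms by (simp add: algebra_simps mult_2)
qed

lemma ssums_2_inj_if_not_power_of_2:
  fixes A B :: "'a::{idom, ring_char_0} multiset"
  assumes size_eq: "size A = size B" and not_pow2: "\<And>k. size A \<noteq> 2 ^ k"
    and ssums_eq: "ssums A 2 = ssums B 2"
  shows "A = B"
proof (rule multiset_eq_if_power_sums_eq)
  show "power_sum A k = power_sum B k" for k
  proof (induction k rule: less_induct)
    case (less k)
    show ?case
    proof (cases "k = 0")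
      case True
      then show ?thesis using size_eq by simp
    next
      case False
      let ?n = "of_nat (size A) :: 'a"
      from False have "k > 0" by simp
      let ?mid = "\<lambda>M. \<Sum>l\<in>{1..<k}. of_nat (k choose l) * power_sum M l * power_sum M (k - l)"
      let ?P = "power_sum (ssums B 2) k"
      have "?mid A = ?mid B"
        using less.IH by (intro sum.cong) auto
      then have eqs: "2 * ?P + 2 ^ k * power_sum A k = 2 * ?n * power_sum A k + ?mid B"
          "2 * ?P + 2 ^ k * power_sum B k = 2 * ?n * power_sum B k + ?mid B"
        using power_sum_ssums_2[of A k] power_sum_ssums_2[of B k]
          power_sum_convolution_split[OF \<open>k > 0\<close>, of A]
          power_sum_convolution_split[OF \<open>k > 0\<close>, of B]
        by (simp_all add: ssums_eq size_eq)
      have "(2 * ?n - 2 ^ k) * (power_sum A k - power_sum B k)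
          = (2 * ?n * power_sum A k + ?mid B) - (2 * ?n * power_sum B k + ?mid B)
            - (2 ^ k * power_sum A k - 2 ^ k * power_sum B k)"
        by (simp add: algebra_simps)
      also have "\<dots> = 0"
        unfolding eqs[symmetric] by simp
      finally have "(2 * ?n - 2 ^ k) * (power_sum A k - power_sum B k) = 0" .
      moreover have "2 * ?n \<noteq> 2 ^ k"
      proof
        assume "2 * ?n = 2 ^ k"
        then have "2 * size A = 2 ^ k"
          by (metis of_nat_eq_of_nat_power_cancel_iff of_nat_mult of_nat_numeral)
        with False have "size A = 2 ^ (k - 1)"
          by (cases k) simp_all
        with not_pow2 show False by blast
      qed
      ultimately show ?thesis by simp
    qed
  qed
qed

lemma ssums_2_eq_shift_union:
  fixes A B :: "'a::comm_monoid_add multiset"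
  assumes "ssums A 2 = ssums B 2"
  shows "ssums (A + image_mset ((+) d) B) 2 = ssums (B + image_mset ((+) d) A) 2"
proof -
  define sh where "sh M = image_mset ((+) d) M" for M :: "'a multiset"
  define D where "D M = image_mset (\<lambda>y. y + y) M" for M :: "'a multiset"
  have balanced: "sumset A A + D B = sumset B B + D A"
    using assms unfolding ssums_2_eq_iff D_def .
  have D_shift: "D (sh M) = sh (sh (D M))" for M
    unfolding D_def sh_def by (simp add: multiset.map_comp o_def add_ac)
  have D_union: "D (M + N) = D M + D N" for M N
    unfolding D_def by simp
  have sh_sumset: "sumset (sh M) N = sh (sumset M N)" "sumset M (sh N) = sh (sumset M N)"
    and sh_union: "sh (M + N) = sh M + sh N" for M N
    unfolding sh_def by (simp_all add: sumset_shift sumset_shift_right)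
  note expand = sumset_union sumset_union_right sh_sumset sh_union D_union D_shift
  let ?cross = "sh (sumset A B) + sh (sumset A B)"
  have "sumset (A + sh B) (A + sh B) + D (B + sh A)
      = (sumset A A + D B) + sh (sh (sumset B B + D A)) + ?cross"
    by (simp add: expand sumset_commute[of B A])
  also have "\<dots> = (sumset B B + D A) + sh (sh (sumset A A + D B)) + ?cross"
    by (simp only: balanced)
  also have "\<dots> = sumset (B + sh A) (B + sh A) + D (A + sh B)"
    by (simp add: expand sumset_commute[of B A])
  finally show ?thesis
    unfolding ssums_2_eq_iff D_def sh_def .
qed

lemma ssums_2_eq_image_mset:
  assumes additive: "\<And>y z. f (y + z) = f y + f z"
    and "ssums A 2 = ssums B 2"
  shows "ssums (image_mset f A) 2 = ssums (image_mset f B) 2"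
proof -
  have image_balance: "sumset (image_mset f M) (image_mset f M) + image_mset (\<lambda>y. y + y) (image_mset f N)
      = image_mset f (sumset M M + image_mset (\<lambda>y. y + y) N)" for M N
    by (simp add: sumset_image_mset[of f, OF additive] multiset.map_comp o_def additive[symmetric])
  from assms(2) show ?thesis
    unfolding ssums_2_eq_iff image_balance by simp
qed

primrec thue_morse_pair :: "nat \<Rightarrow> nat multiset \<times> nat multiset" where
  "thue_morse_pair 0 = ({#0#}, {#1#})"
| "thue_morse_pair (Suc k) =
     (case thue_morse_pair k of (A, B) \<Rightarrow>
        (A + image_mset ((+) (2 ^ k)) B, B + image_mset ((+) (2 ^ k)) A))"

lemma thue_morse_pair_collision:
  assumes "thue_morse_pair k = (A, B)"
  shows "size A = 2 ^ k \<and> size B = 2 ^ k \<and> 0 \<in># A \<and> 0 \<notin># B \<and> ssums A 2 = ssums B 2"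
  using assms
proof (induction k arbitrary: A B)
  case 0
  then show ?case by (auto simp: ssums_2_eq_iff)
next
  case (Suc k)
  obtain A0 B0 where prev: "thue_morse_pair k = (A0, B0)"
    by fastforce
  then show ?case
    using Suc.prems Suc.IH[OF prev] by (auto intro: ssums_2_eq_shift_union)
qed

lemma ex_ssums_2_collision_pow2:
  "\<exists>A B :: 'a::semiring_char_0 multiset. size A = 2 ^ k \<and> size B = 2 ^ k \<and> A \<noteq> B \<and>
     ssums A 2 = ssums B 2"
proof -
  obtain A B where "thue_morse_pair k = (A, B)"
    by fastforce
  then have props: "size A = 2 ^ k" "size B = 2 ^ k" "0 \<in># A" "0 \<notin># B" "ssums A 2 = ssums B 2"
    using thue_morse_pair_collision by blast+
  have "(0 :: 'a) \<in># image_mset of_nat A" "(0 :: 'a) \<notin># image_mset of_nat B"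
    using props(3,4) by (force, auto)
  then have "image_mset (of_nat :: nat \<Rightarrow> 'a) A \<noteq> image_mset of_nat B"
    by metis
  moreover have "ssums (image_mset (of_nat :: nat \<Rightarrow> 'a) A) 2 = ssums (image_mset of_nat B) 2"
    by (rule ssums_2_eq_image_mset) (simp_all add: props)
  ultimately show ?thesis
    using props by (intro exI[of _ "image_mset of_nat A"] exI[of _ "image_mset of_nat B"]) auto
qed

theorem mainTheorem1:
  fixes n :: nat
  assumes "n > 2"
  shows "(\<exists>A B :: complex multiset. size A = n \<and> size B = n \<and> A \<noteq> B \<and>
            ssums A 2 = ssums B 2) \<longleftrightarrow> (\<exists>k::nat. n = 2 ^ k)"
proof
  assume "\<exists>A B :: complex multiset. size A = n \<and> size B = n \<and> A \<noteq> B \<and> ssums A 2 = ssums B 2"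
  then obtain A B :: "complex multiset"
    where "size A = n" "size B = n" "A \<noteq> B" "ssums A 2 = ssums B 2"
    by blast
  then show "\<exists>k. n = 2 ^ k"
    using ssums_2_inj_if_not_power_of_2[of A B] by auto
next
  assume "\<exists>k. n = 2 ^ k"
  then show "\<exists>A B :: complex multiset. size A = n \<and> size B = n \<and> A \<noteq> B \<and> ssums A 2 = ssums B 2"
    using ex_ssums_2_collision_pow2 by blast
qed

end
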